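(* Let $\ket\psi$ be a pure $n$-qubit state and $t\ge1$. With $p_t$ the output distribution of the $t$-copy hidden cut circuit on $\ket\psi$, we have $p_t = p_1^{\ast t} = p_1\ast\cdots\ast p_1$ ($t$ factors), where $(f\ast g)(\bm x)=\sum_{\bm x'\in\{0,1\}^n} f(\bm x')\,g(\bm x\oplus\bm x')$. Equivalently $p_t=\mathcal F^{-1}\bigl[\mathcal F[p_1]^t\bigr]$ with $\mathcal F[f](\bm s)=\sum_{\bm x}(-1)^{\bm x\cdot\bm s}f(\bm x)$ and $\mathcal F^{-1}[\hat f](\bm x)=2^{-n}\sum_{\bm s}(-1)^{\bm x\cdot\bm s}\hat f(\bm s)$.
   Context: $\oplus$ is bitwise addition mod 2, and $\bm x\cdot\bm s$ is the dot product mod 2. $\mathrm{SWAP}_{\bm s}$ acts on two copies of the $n$-qubit space by swapping the qubits of subsystem $\bm s$ (bitstring $\bm s\in\{0,1\}^n$, qubit $j$ included iff $s_j=1$) between the copies. The $t$-copy hidden cut circuit: an $n$-qubit group register is initialized to $\ket{0^n}$ and a state register to $(\ket\psi\ket\psi)^{\otimes t}$; apply $H^{\otimes n}$ to the group register; apply $\sum_{\bm s}\ket{\bm s}\bra{\bm s}\otimes \mathrm{SWAP}_{\bm s}^{\otimes t}$; apply $H^{\otimes n}$ to the group register; measure the group register in the computational basis; $p_t$ denotes the resulting distribution. *)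

theory Defs
  imports Complex_Main "HOL-Library.FuncSet"
begin

text \<open>n-bit strings are boolean lists of length n (entry j = qubit j).\<close>
definition bits :: "nat \<Rightarrow> bool list set" where
  "bits n = {x. length x = n}"

definition bxor :: "bool list \<Rightarrow> bool list \<Rightarrow> bool list" where
  "bxor x y = map2 (\<noteq>) x y"

text \<open>Number of positions where both strings are 1; the dot product mod 2 is its parity,
  so the sign (-1)^(x.s) equals (-1)^(bdot x s).\<close>
definition bdot :: "bool list \<Rightarrow> bool list \<Rightarrow> nat" where
  "bdot x s = length (filter id (map2 (\<and>) x s))"

text \<open>Qubits of copy a, with the qubits in subsystem s replaced by those of copy b.\<close>
definition swap_first :: "bool list \<Rightarrow> bool list \<Rightarrow> bool list \<Rightarrow> bool list" where
  "swap_first s a b = map (\<lambda>(sj, aj, bj). if sj then bj else aj) (zip s (zip a b))"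

text \<open>Basis of the state register: 2t copies of n qubits, copies (2k, 2k+1) form the k-th pair.\<close>
definition reg_basis :: "nat \<Rightarrow> nat \<Rightarrow> (nat \<Rightarrow> bool list) set" where
  "reg_basis n t = PiE {..<2*t} (\<lambda>_. bits n)"

text \<open>Action of SWAP_s^{\<otimes>t} on a basis state of the state register
  (a permutation of the basis, which is an involution).\<close>
definition swap_reg :: "nat \<Rightarrow> bool list \<Rightarrow> (nat \<Rightarrow> bool list) \<Rightarrow> (nat \<Rightarrow> bool list)" where
  "swap_reg t s r = (\<lambda>k. if k < 2*t then
       (if even k then swap_first s (r k) (r (Suc k)) else swap_first s (r k) (r (k - 1)))
     else r k)"

text \<open>Joint states: amplitude functions (group basis x, register basis r) \<mapsto> amplitude.\<close>
type_synonym jstate = "bool list \<Rightarrow> (nat \<Rightarrow> bool list) \<Rightarrow> complex"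

definition init_state :: "nat \<Rightarrow> nat \<Rightarrow> (bool list \<Rightarrow> complex) \<Rightarrow> jstate" where
  "init_state n t \<psi> x r =
     (if x = replicate n False then 1 else 0) * (\<Prod>k<2*t. \<psi> (r k))"

definition hadamard_grp :: "nat \<Rightarrow> jstate \<Rightarrow> jstate" where
  "hadamard_grp n v x r =
     complex_of_real (1 / sqrt (2 ^ n)) * (\<Sum>s\<in>bits n. (-1) ^ bdot x s * v s r)"

text \<open>Controlled swap \<Sum>_s |s><s| \<otimes> SWAP_s^{\<otimes>t}.\<close>
definition ctrl_swap :: "nat \<Rightarrow> jstate \<Rightarrow> jstate" where
  "ctrl_swap t v s r = v s (swap_reg t s r)"

definition hidden_cut_final :: "nat \<Rightarrow> nat \<Rightarrow> (bool list \<Rightarrow> complex) \<Rightarrow> jstate" where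
  "hidden_cut_final n t \<psi> =
     hadamard_grp n (ctrl_swap t (hadamard_grp n (init_state n t \<psi>)))"

definition hidden_cut_dist :: "nat \<Rightarrow> nat \<Rightarrow> (bool list \<Rightarrow> complex) \<Rightarrow> bool list \<Rightarrow> real" where
  "hidden_cut_dist n t \<psi> x = (\<Sum>r\<in>reg_basis n t. (cmod (hidden_cut_final n t \<psi> x r))\<^sup>2)"

definition conv :: "nat \<Rightarrow> (bool list \<Rightarrow> real) \<Rightarrow> (bool list \<Rightarrow> real) \<Rightarrow> bool list \<Rightarrow> real" where
  "conv n f g x = (\<Sum>x'\<in>bits n. f x' * g (bxor x x'))"

primrec conv_pow :: "nat \<Rightarrow> (bool list \<Rightarrow> real) \<Rightarrow> nat \<Rightarrow> bool list \<Rightarrow> real" where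
  "conv_pow n f 0 = (\<lambda>x. if x = replicate n False then 1 else 0)"
| "conv_pow n f (Suc k) = conv n f (conv_pow n f k)"

definition fourier :: "nat \<Rightarrow> (bool list \<Rightarrow> real) \<Rightarrow> bool list \<Rightarrow> real" where
  "fourier n f s = (\<Sum>x\<in>bits n. (-1) ^ bdot x s * f x)"

definition ifourier :: "nat \<Rightarrow> (bool list \<Rightarrow> real) \<Rightarrow> bool list \<Rightarrow> real" where
  "ifourier n fh x = (1 / 2 ^ n) * (\<Sum>s\<in>bits n. (-1) ^ bdot x s * fh s)"

end

theory Submission
  imports Defs
begin

(* The final amplitude of |x>|r> is 2^-n * sum_s (-1)^(x.s) <r| SWAP_s^t |psi^(2t)>.  Summing its
   squared modulus over the register basis factorises over the t pairs of copies, so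
   p_t(x) = 4^-n * sum_(s,s') (-1)^(x.(s xor s')) M(s,s')^t  with  M(s,s') = <SWAP_s' psi psi|SWAP_s psi psi>.
   The swaps are commuting involutions, hence M(s,s') = m(s xor s') with m(u) = <SWAP_u psi psi|psi psi>,
   and p_t is the inverse Walsh-Hadamard transform of m^t.  For t = 1 this identifies m with the
   transform of p_1, and the convolution theorem turns the t-th power into the t-fold convolution. *)

lemma bdot_Nil [simp]: "bdot [] s = 0" "bdot x [] = 0"
  by (simp_all add: bdot_def)

lemma bdot_Cons [simp]: "bdot (a # x) (b # s) = (if a \<and> b then Suc (bdot x s) else bdot x s)"
  by (simp add: bdot_def)

lemma bxor_Nil [simp]: "bxor [] y = []" "bxor x [] = []"
  by (simp_all add: bxor_def)

lemma bxor_Cons [simp]: "bxor (a # x) (b # y) = (a \<noteq> b) # bxor x y"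
  by (simp add: bxor_def)

lemma length_bxor [simp]: "length (bxor x y) = min (length x) (length y)"
  by (simp add: bxor_def)

lemma swap_first_Nil [simp]: "swap_first [] x y = []" "swap_first s [] y = []" "swap_first s x [] = []"
  by (simp_all add: swap_first_def)

lemma swap_first_Cons [simp]:
  "swap_first (c # s) (a # x) (b # y) = (if c then b else a) # swap_first s x y"
  by (simp add: swap_first_def)

lemma length_swap_first [simp]: "length (swap_first s a b) = min (length s) (min (length a) (length b))"
  by (simp add: swap_first_def)

lemma mem_bits_iff: "x \<in> bits n \<longleftrightarrow> length x = n"
  by (simp add: bits_def)

lemma bits_0 [simp]: "bits 0 = {[]}"
  by (auto simp: bits_def)

lemma bits_Suc: "bits (Suc n) = Cons True ` bits n \<union> Cons False ` bits n"
  by (auto simp: bits_def length_Suc_conv image_iff)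

lemma finite_bits [simp]: "finite (bits n)"
  by (induction n) (simp_all add: bits_Suc)

lemma sum_bits_Suc: "(\<Sum>x\<in>bits (Suc n). f x) = (\<Sum>x\<in>bits n. f (True # x) + f (False # x))"
proof -
  have "(\<Sum>x\<in>bits (Suc n). f x) = (\<Sum>x\<in>Cons True ` bits n. f x) + (\<Sum>x\<in>Cons False ` bits n. f x)"
    unfolding bits_Suc by (rule sum.union_disjoint) auto
  also have "\<dots> = (\<Sum>x\<in>bits n. f (True # x)) + (\<Sum>x\<in>bits n. f (False # x))"
    by (simp add: sum.reindex)
  finally show ?thesis
    by (simp add: sum.distrib)
qed

lemma card_bits: "card (bits n) = 2 ^ n"
proof (induction n)
  case (Suc n)
  have "card (bits (Suc n)) = card (Cons True ` bits n) + card (Cons False ` bits n)"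
    unfolding bits_Suc by (rule card_Un_disjoint) auto
  then show ?case
    using Suc by (simp add: card_image)
qed simp

lemma bdot_commute: "bdot x s = bdot s x"
proof (induction x arbitrary: s)
  case (Cons a x)
  then show ?case by (cases s) auto
qed simp

lemma bdot_replicate_False [simp]: "bdot (replicate n False) s = 0" "bdot s (replicate n False) = 0"
proof -
  show "bdot (replicate n False) s = 0"
  proof (induction n arbitrary: s)
    case (Suc n)
    then show ?case by (cases s) auto
  qed simp
  then show "bdot s (replicate n False) = 0"
    by (simp add: bdot_commute)
qed

lemma bxor_commute: "bxor x y = bxor y x"
proof (induction x arbitrary: y)
  case (Cons a x)
  then show ?case by (cases y) auto
qed simp

lemma bxor_bxor_cancel: "length x = length y \<Longrightarrow> bxor x (bxor x y) = y"
proof (induction x arbitrary: y)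
  case (Cons a x)
  then show ?case by (cases y) auto
qed simp

lemma bxor_eq_replicate_False_iff:
  "length s = length u \<Longrightarrow> bxor s u = replicate (length s) False \<longleftrightarrow> s = u"
proof (induction s arbitrary: u)
  case (Cons c s)
  then show ?case by (cases u) auto
qed simp

lemma sign_bdot_bxor:
  "length s = length u \<Longrightarrow> (-1 :: 'a :: ring_1) ^ bdot x (bxor s u) = (-1) ^ bdot x s * (-1) ^ bdot x u"
proof (induction s arbitrary: x u)
  case (Cons c s)
  then obtain d u' where u: "u = d # u'"
    by (cases u) auto
  show ?case
  proof (cases x)
    case (Cons a x')
    then show ?thesis using Cons.IH[of u' x'] Cons.prems u by auto
  qed simp
qed simp

lemma sum_bits_bxor_shift: "a \<in> bits n \<Longrightarrow> (\<Sum>y\<in>bits n. h (bxor a y)) = (\<Sum>y\<in>bits n. h y)"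
  by (rule sum.reindex_bij_witness[of _ "bxor a" "bxor a"]) (auto simp: bxor_bxor_cancel mem_bits_iff)

lemma sum_sign_bdot:
  "u \<in> bits n \<Longrightarrow>
   (\<Sum>x\<in>bits n. (-1 :: 'a :: comm_ring_1) ^ bdot x u) = (if u = replicate n False then 2 ^ n else 0)"
proof (induction n arbitrary: u)
  case (Suc n)
  then obtain b u' where u: "u = b # u'" "u' \<in> bits n"
    by (cases u) (auto simp: mem_bits_iff)
  show ?case
  proof (cases b)
    case True
    then show ?thesis by (simp add: sum_bits_Suc u)
  next
    case False
    then have "(\<Sum>x\<in>bits (Suc n). (-1 :: 'a) ^ bdot x u) = 2 * (\<Sum>x\<in>bits n. (-1) ^ bdot x u')"
      by (simp add: sum_bits_Suc u sum_distrib_left flip: mult_2)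
    then show ?thesis
      using Suc.IH[OF u(2)] u False by simp
  qed
qed simp

lemma sum_sign_bdot_mult:
  assumes "s \<in> bits n" "u \<in> bits n"
  shows "(\<Sum>x\<in>bits n. (-1 :: 'a :: comm_ring_1) ^ bdot x s * (-1) ^ bdot x u) = (if s = u then 2 ^ n else 0)"
proof -
  have "(\<Sum>x\<in>bits n. (-1 :: 'a) ^ bdot x s * (-1) ^ bdot x u) = (\<Sum>x\<in>bits n. (-1) ^ bdot x (bxor s u))"
    using assms by (simp add: sign_bdot_bxor mem_bits_iff)
  then show ?thesis
    using assms sum_sign_bdot[of "bxor s u" n] bxor_eq_replicate_False_iff[of s u]
    by (simp add: mem_bits_iff)
qed

lemma walsh_inversion:
  assumes s: "s \<in> bits n"
  shows "(\<Sum>x\<in>bits n. (-1 :: 'a :: comm_ring_1) ^ bdot x s * (\<Sum>u\<in>bits n. (-1) ^ bdot x u * h u)) = 2 ^ n * h s"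
proof -
  have "(\<Sum>x\<in>bits n. (-1 :: 'a) ^ bdot x s * (\<Sum>u\<in>bits n. (-1) ^ bdot x u * h u))
      = (\<Sum>u\<in>bits n. (\<Sum>x\<in>bits n. (-1 :: 'a) ^ bdot x s * (-1) ^ bdot x u) * h u)"
    by (simp add: sum_distrib_left sum_distrib_right mult.assoc) (rule sum.swap)
  also have "\<dots> = (\<Sum>u\<in>bits n. if s = u then 2 ^ n * h u else 0)"
    by (rule sum.cong) (auto simp: sum_sign_bdot_mult s)
  also have "\<dots> = 2 ^ n * h s"
    using s by simp
  finally show ?thesis .
qed

lemma sum_sign_bdot_pairs_bxor:
  "(\<Sum>s\<in>bits n. \<Sum>s'\<in>bits n. (-1 :: 'a :: comm_ring_1) ^ bdot x s * (-1) ^ bdot x s' * f (bxor s s'))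
     = 2 ^ n * (\<Sum>u\<in>bits n. (-1) ^ bdot x u * f u)"
proof -
  have "(\<Sum>s\<in>bits n. \<Sum>s'\<in>bits n. (-1 :: 'a) ^ bdot x s * (-1) ^ bdot x s' * f (bxor s s'))
      = (\<Sum>s\<in>bits n. \<Sum>s'\<in>bits n. (-1) ^ bdot x (bxor s s') * f (bxor s s'))"
    by (intro sum.cong refl) (simp add: sign_bdot_bxor mem_bits_iff)
  also have "\<dots> = (\<Sum>s\<in>bits n. \<Sum>u\<in>bits n. (-1) ^ bdot x u * f u)"
    by (intro sum.cong refl sum_bits_bxor_shift[where h = "\<lambda>u. (-1) ^ bdot x u * f u"])
  finally show ?thesis
    by (simp add: card_bits)
qed

lemma ifourier_fourier: "x \<in> bits n \<Longrightarrow> ifourier n (fourier n f) x = f x"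
  using walsh_inversion[of x n f] by (simp add: ifourier_def fourier_def bdot_commute)

lemma fourier_conv: "fourier n (conv n f g) s = fourier n f s * fourier n g s"
proof -
  have shift: "(\<Sum>x\<in>bits n. (-1) ^ bdot x s * g (bxor x x')) = (-1) ^ bdot x' s * fourier n g s"
    if x': "x' \<in> bits n" for x'
  proof -
    have "(\<Sum>x\<in>bits n. (-1 :: real) ^ bdot x s * g (bxor x x'))
        = (\<Sum>y\<in>bits n. (-1) ^ bdot (bxor x' y) s * g (bxor (bxor x' y) x'))"
      using sum_bits_bxor_shift[OF x', of "\<lambda>x. (-1 :: real) ^ bdot x s * g (bxor x x')"] by simp
    also have "\<dots> = (\<Sum>y\<in>bits n. (-1) ^ bdot x' s * ((-1) ^ bdot y s * g y))"
      using x' by (intro sum.cong refl)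
        (simp add: bdot_commute[of _ s] sign_bdot_bxor bxor_commute[of _ x'] bxor_bxor_cancel mem_bits_iff)
    finally show ?thesis
      by (simp add: fourier_def sum_distrib_left)
  qed
  have "fourier n (conv n f g) s = (\<Sum>x'\<in>bits n. f x' * (\<Sum>x\<in>bits n. (-1) ^ bdot x s * g (bxor x x')))"
    unfolding fourier_def conv_def sum_distrib_left by (subst sum.swap) (simp add: mult_ac)
  also have "\<dots> = (\<Sum>x'\<in>bits n. f x' * ((-1) ^ bdot x' s * fourier n g s))"
    by (simp add: shift)
  finally show ?thesis
    by (simp add: fourier_def sum_distrib_right mult_ac)
qed

lemma fourier_conv_pow: "fourier n (conv_pow n f k) s = fourier n f s ^ k"
proof (induction k)
  case 0
  have "fourier n (conv_pow n f 0) s = (\<Sum>x\<in>bits n. if x = replicate n False then 1 else 0)"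
    unfolding fourier_def by (rule sum.cong) auto
  then show ?case
    by (simp add: mem_bits_iff)
next
  case (Suc k)
  then show ?case
    by (simp add: fourier_conv)
qed

lemma conv_pow_eq_ifourier: "x \<in> bits n \<Longrightarrow> conv_pow n f k x = ifourier n (\<lambda>s. fourier n f s ^ k) x"
  using ifourier_fourier[of x n "conv_pow n f k"] by (simp add: fourier_conv_pow[abs_def])

lemma prod_lessThan_double: "(\<Prod>k<2 * t. g k) = (\<Prod>j<t. g (2 * j) * g (Suc (2 * j)))"
  by (induction t) (simp_all add: mult.assoc)

lemma sum_PiE_insert:
  assumes "i \<notin> I"
  shows "(\<Sum>r\<in>PiE (insert i I) B. F r) = (\<Sum>y\<in>B i. \<Sum>g\<in>PiE I B. F (g(i := y)))"
proof -
  have "(\<Sum>r\<in>PiE (insert i I) B. F r) = (\<Sum>(y, g)\<in>B i \<times> PiE I B. F (g(i := y)))"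
    unfolding PiE_insert_eq by (simp add: sum.reindex[OF inj_combinator[OF assms]] prod.case_distrib)
  then show ?thesis
    by (simp add: sum.cartesian_product)
qed

lemma sum_PiE_prod_pairs:
  fixes F :: "'a \<Rightarrow> 'a \<Rightarrow> 'b :: comm_semiring_1"
  shows "(\<Sum>r\<in>PiE {..<2 * t} (\<lambda>_. A). \<Prod>j<t. F (r (2 * j)) (r (Suc (2 * j)))) = (\<Sum>a\<in>A. \<Sum>b\<in>A. F a b) ^ t"
proof (induction t)
  case (Suc t)
  let ?P = "\<lambda>g. \<Prod>j<t. F (g (2 * j)) (g (Suc (2 * j)))"
  have dom: "{..<2 * Suc t} = insert (Suc (2 * t)) (insert (2 * t) {..<2 * t})"
    by auto
  have upd: "?P (g(2 * t := a, Suc (2 * t) := b)) = ?P g" for g a b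
    by (rule prod.cong) auto
  have "(\<Sum>r\<in>PiE {..<2 * Suc t} (\<lambda>_. A). \<Prod>j<Suc t. F (r (2 * j)) (r (Suc (2 * j))))
      = (\<Sum>b\<in>A. \<Sum>a\<in>A. \<Sum>g\<in>PiE {..<2 * t} (\<lambda>_. A). ?P g * F a b)"
    unfolding dom by (simp add: sum_PiE_insert upd)
  also have "\<dots> = (\<Sum>b\<in>A. \<Sum>a\<in>A. (\<Sum>g\<in>PiE {..<2 * t} (\<lambda>_. A). ?P g) * F a b)"
    by (simp add: sum_distrib_right)
  also have "\<dots> = (\<Sum>g\<in>PiE {..<2 * t} (\<lambda>_. A). ?P g) * (\<Sum>a\<in>A. \<Sum>b\<in>A. F a b)"
    by (subst sum.swap) (simp add: sum_distrib_left)
  finally show ?case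
    using Suc.IH by (simp add: mult.commute)
qed simp

(* In Dirac notation, with psi psi the state of one pair of copies:
   swapped_amplitude psi t s r = <r| SWAP_s^t |psi^(2t)>,
   swap_overlap psi n s s' = <SWAP_s' psi psi | SWAP_s psi psi>,
   swap_expectation psi n u = <SWAP_u psi psi | psi psi>. *)
definition swapped_pair :: "(bool list \<Rightarrow> complex) \<Rightarrow> bool list \<Rightarrow> bool list \<Rightarrow> bool list \<Rightarrow> complex" where
  "swapped_pair \<psi> s a b = \<psi> (swap_first s a b) * \<psi> (swap_first s b a)"

definition swapped_amplitude :: "(bool list \<Rightarrow> complex) \<Rightarrow> nat \<Rightarrow> bool list \<Rightarrow> (nat \<Rightarrow> bool list) \<Rightarrow> complex" where
  "swapped_amplitude \<psi> t s r = (\<Prod>j<t. swapped_pair \<psi> s (r (2 * j)) (r (Suc (2 * j))))"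

definition swap_overlap :: "(bool list \<Rightarrow> complex) \<Rightarrow> nat \<Rightarrow> bool list \<Rightarrow> bool list \<Rightarrow> complex" where
  "swap_overlap \<psi> n s s' = (\<Sum>a\<in>bits n. \<Sum>b\<in>bits n. swapped_pair \<psi> s a b * cnj (swapped_pair \<psi> s' a b))"

definition swap_expectation :: "(bool list \<Rightarrow> complex) \<Rightarrow> nat \<Rightarrow> bool list \<Rightarrow> complex" where
  "swap_expectation \<psi> n u = (\<Sum>a\<in>bits n. \<Sum>b\<in>bits n. \<psi> a * \<psi> b * cnj (swapped_pair \<psi> u a b))"

lemma prod_swap_reg: "(\<Prod>k<2 * t. \<psi> (swap_reg t s r k)) = swapped_amplitude \<psi> t s r"
  unfolding prod_lessThan_double swapped_amplitude_def swapped_pair_def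
  by (rule prod.cong) (auto simp: swap_reg_def)

lemma sum_swapped_amplitude_cnj:
  "(\<Sum>r\<in>reg_basis n t. swapped_amplitude \<psi> t s r * cnj (swapped_amplitude \<psi> t s' r)) = swap_overlap \<psi> n s s' ^ t"
  unfolding reg_basis_def swapped_amplitude_def swap_overlap_def
  using sum_PiE_prod_pairs[where F = "\<lambda>a b. swapped_pair \<psi> s a b * cnj (swapped_pair \<psi> s' a b)"]
  by (simp add: prod.distrib)

lemma swap_first_swap_first:
  "length s = length a \<Longrightarrow> length s' = length a \<Longrightarrow> length b = length a \<Longrightarrow>
   swap_first s' (swap_first s a b) (swap_first s b a) = swap_first (bxor s s') a b"
proof (induction a arbitrary: s s' b)
  case (Cons c a)
  then show ?case by (cases s; cases s'; cases b) auto
qed simp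

lemma swap_first_bxor_self: "length s = length a \<Longrightarrow> length b = length a \<Longrightarrow> swap_first (bxor s s) a b = a"
proof (induction a arbitrary: s b)
  case (Cons c a)
  then show ?case by (cases s; cases b) auto
qed simp

lemma swap_overlap_eq_swap_expectation:
  assumes "s \<in> bits n" "s' \<in> bits n"
  shows "swap_overlap \<psi> n s s' = swap_expectation \<psi> n (bxor s s')"
proof -
  let ?\<phi> = "\<lambda>(a, b). (swap_first s a b, swap_first s b a)"
  have "swap_overlap \<psi> n s s' = (\<Sum>(a, b)\<in>bits n \<times> bits n. swapped_pair \<psi> s a b * cnj (swapped_pair \<psi> s' a b))"
    unfolding swap_overlap_def by (rule sum.cartesian_product)
  also have "\<dots> = (\<Sum>(a, b)\<in>bits n \<times> bits n. \<psi> a * \<psi> b * cnj (swapped_pair \<psi> (bxor s s') a b))"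
    by (rule sym, rule sum.reindex_bij_witness[of _ ?\<phi> ?\<phi>])
      (use assms in \<open>auto simp: swapped_pair_def swap_first_swap_first swap_first_bxor_self mem_bits_iff\<close>)
  also have "\<dots> = swap_expectation \<psi> n (bxor s s')"
    unfolding swap_expectation_def by (rule sum.cartesian_product[symmetric])
  finally show ?thesis .
qed

lemma hadamard_grp_init_state:
  "hadamard_grp n (init_state n t \<psi>) x r = complex_of_real (1 / sqrt (2 ^ n)) * (\<Prod>k<2 * t. \<psi> (r k))"
proof -
  have "(\<Sum>s\<in>bits n. (-1) ^ bdot x s * init_state n t \<psi> s r)
      = (\<Sum>s\<in>bits n. if s = replicate n False then (\<Prod>k<2 * t. \<psi> (r k)) else 0)"
    by (rule sum.cong) (auto simp: init_state_def)
  then show ?thesis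
    by (simp add: hadamard_grp_def mem_bits_iff)
qed

lemma hidden_cut_final_eq:
  "hidden_cut_final n t \<psi> x r
   = complex_of_real (1 / 2 ^ n) * (\<Sum>s\<in>bits n. (-1) ^ bdot x s * swapped_amplitude \<psi> t s r)"
proof -
  let ?c = "complex_of_real (1 / sqrt (2 ^ n))"
  have "hidden_cut_final n t \<psi> x r = ?c * (\<Sum>s\<in>bits n. (-1) ^ bdot x s * (?c * swapped_amplitude \<psi> t s r))"
    by (simp only: hidden_cut_final_def hadamard_grp_def[of n "ctrl_swap _ _"] ctrl_swap_def
        hadamard_grp_init_state prod_swap_reg)
  also have "\<dots> = ?c * ?c * (\<Sum>s\<in>bits n. (-1) ^ bdot x s * swapped_amplitude \<psi> t s r)"
    by (simp only: sum_distrib_left mult_ac)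
  also have "?c * ?c = complex_of_real (1 / 2 ^ n)"
    by (simp flip: of_real_mult)
  finally show ?thesis .
qed

lemma hidden_cut_dist_eq_overlap:
  "complex_of_real (hidden_cut_dist n t \<psi> x)
   = complex_of_real ((1 / 2 ^ n)\<^sup>2) *
     (\<Sum>s\<in>bits n. \<Sum>s'\<in>bits n. (-1) ^ bdot x s * (-1) ^ bdot x s' * swap_overlap \<psi> n s s' ^ t)"
proof -
  let ?c = "complex_of_real ((1 / 2 ^ n)\<^sup>2)"
  let ?A = "swapped_amplitude \<psi> t"
  have norm_sq: "complex_of_real ((cmod (hidden_cut_final n t \<psi> x r))\<^sup>2)
      = ?c * (\<Sum>s\<in>bits n. \<Sum>s'\<in>bits n. (-1) ^ bdot x s * (-1) ^ bdot x s' * (?A s r * cnj (?A s' r)))" for r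
    unfolding complex_norm_square hidden_cut_final_eq
    by (simp add: sum_product power2_eq_square mult_ac)
  have "complex_of_real (hidden_cut_dist n t \<psi> x)
      = ?c * (\<Sum>s\<in>bits n. \<Sum>s'\<in>bits n. (-1) ^ bdot x s * (-1) ^ bdot x s' *
               (\<Sum>r\<in>reg_basis n t. ?A s r * cnj (?A s' r)))"
    unfolding hidden_cut_dist_def of_real_sum norm_sq
    by (simp add: sum_distrib_left sum.swap[of _ "reg_basis n t"])
  then show ?thesis
    by (simp add: sum_swapped_amplitude_cnj)
qed

lemma hidden_cut_dist_eq:
  "complex_of_real (hidden_cut_dist n t \<psi> x)
   = complex_of_real (1 / 2 ^ n) * (\<Sum>u\<in>bits n. (-1) ^ bdot x u * swap_expectation \<psi> n u ^ t)"
proof -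
  have "complex_of_real (hidden_cut_dist n t \<psi> x)
      = complex_of_real ((1 / 2 ^ n)\<^sup>2) *
        (\<Sum>s\<in>bits n. \<Sum>s'\<in>bits n. (-1) ^ bdot x s * (-1) ^ bdot x s' * swap_expectation \<psi> n (bxor s s') ^ t)"
    unfolding hidden_cut_dist_eq_overlap
    by (intro arg_cong[where f = "(*) _"] sum.cong refl) (simp add: swap_overlap_eq_swap_expectation)
  also have "\<dots> = complex_of_real ((1 / 2 ^ n)\<^sup>2) * 2 ^ n *
        (\<Sum>u\<in>bits n. (-1) ^ bdot x u * swap_expectation \<psi> n u ^ t)"
    unfolding sum_sign_bdot_pairs_bxor[where f = "\<lambda>u. swap_expectation \<psi> n u ^ t"] by (simp only: mult.assoc)
  finally show ?thesis
    by (simp add: power2_eq_square)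
qed

lemma fourier_hidden_cut_dist_one:
  assumes "u \<in> bits n"
  shows "complex_of_real (fourier n (hidden_cut_dist n 1 \<psi>) u) = swap_expectation \<psi> n u"
proof -
  have "complex_of_real (fourier n (hidden_cut_dist n 1 \<psi>) u)
      = complex_of_real (1 / 2 ^ n) *
        (\<Sum>x\<in>bits n. (-1) ^ bdot x u * (\<Sum>v\<in>bits n. (-1) ^ bdot x v * swap_expectation \<psi> n v))"
    by (simp add: fourier_def hidden_cut_dist_eq sum_distrib_left mult_ac)
  then show ?thesis
    by (simp add: walsh_inversion[OF assms])
qed

lemma hidden_cut_dist_eq_ifourier:
  "hidden_cut_dist n t \<psi> x = ifourier n (\<lambda>s. fourier n (hidden_cut_dist n 1 \<psi>) s ^ t) x"
proof -
  have "complex_of_real (ifourier n (\<lambda>s. fourier n (hidden_cut_dist n 1 \<psi>) s ^ t) x)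
      = complex_of_real (1 / 2 ^ n) *
        (\<Sum>s\<in>bits n. (-1) ^ bdot x s * complex_of_real (fourier n (hidden_cut_dist n 1 \<psi>) s) ^ t)"
    by (simp add: ifourier_def)
  also have "\<dots> = complex_of_real (1 / 2 ^ n) * (\<Sum>s\<in>bits n. (-1) ^ bdot x s * swap_expectation \<psi> n s ^ t)"
    by (intro arg_cong[where f = "(*) _"] sum.cong refl) (simp only: fourier_hidden_cut_dist_one)
  also have "\<dots> = complex_of_real (hidden_cut_dist n t \<psi> x)"
    by (rule hidden_cut_dist_eq[symmetric])
  finally show ?thesis
    by (simp only: of_real_eq_iff)
qed

theorem mainTheorem3:
  fixes n t :: nat and \<psi> :: "bool list \<Rightarrow> complex"
  assumes "t \<ge> 1"
    and "(\<Sum>x\<in>bits n. (cmod (\<psi> x))\<^sup>2) = 1"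
  shows "(\<forall>x\<in>bits n. hidden_cut_dist n t \<psi> x = conv_pow n (hidden_cut_dist n 1 \<psi>) t x)
       \<and> (\<forall>x\<in>bits n. hidden_cut_dist n t \<psi> x =
             ifourier n (\<lambda>s. (fourier n (hidden_cut_dist n 1 \<psi>) s) ^ t) x)"
  by (simp add: hidden_cut_dist_eq_ifourier conv_pow_eq_ifourier)

end
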